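(* Let $C^\lambda_{\mu\nu}$ be structure constants of an $n$-dimensional Lie algebra over a field $k$ of characteristic zero, $\mathcal C$ the matrix with entries $\mathcal C^\alpha_\beta=C^\alpha_{\beta\gamma}\partial^\gamma$ in $k[[\partial^1,\dots,\partial^n]]$, and $\delta_\rho:=\frac{\partial}{\partial(\partial^\rho)}$. Then for every $N=0,1,2,\dots$ and all indices $\gamma,\mu,\nu$, $$[\delta_\rho(\mathcal C^N)^\gamma_\mu]\,\mathcal C^\rho_\nu-(\delta_\rho\mathcal C^\gamma_\nu)(\mathcal C^N)^\rho_\mu=C^\sigma_{\mu\nu}(\mathcal C^N)^\gamma_\sigma .$$
   Context: Summation over repeated indices is understood. "Structure constants of a Lie algebra" means $[\hat x_\mu,\hat x_\nu]=C^\lambda_{\mu\nu}\hat x_\lambda$ for a basis $\hat x_1,\dots,\hat x_n$, so they are antisymmetric in the lower indices and satisfy the Jacobi identity. $\mathcal C^N$ is the $N$-th matrix power ($\mathcal C^0$ the identity matrix), and $\delta_\rho$ is the formal partial derivative with respect to the variable $\partial^\rho$. *)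

theory Defs
  imports "HOL-Library.Poly_Mapping"
begin

text \<open>Polynomials over 'k in the commuting variables \<partial>^i, i :: 'n (a finite index type of
  size n): the exponent vectors ('n to nat, finitely supported) are monomials (exponent vectors), and a polynomial maps monomials to
  coefficients; multiplication is the convolution product of Poly_Mapping.\<close>

type_synonym ('n, 'k) mpoly = "('n \<Rightarrow>\<^sub>0 nat) \<Rightarrow>\<^sub>0 'k"

definition pconst :: "'k::comm_ring_1 \<Rightarrow> ('n, 'k) mpoly" where
  "pconst c = Poly_Mapping.single 0 c"

definition pvar :: "'n \<Rightarrow> ('n, 'k::comm_ring_1) mpoly" where
  "pvar i = Poly_Mapping.single (Poly_Mapping.single i 1) 1"

definition pderiv_var :: "'n \<Rightarrow> ('n, 'k::comm_ring_1) mpoly \<Rightarrow> ('n, 'k) mpoly" where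
  "pderiv_var \<rho> p =
     (\<Sum>m\<in>Poly_Mapping.keys p. Poly_Mapping.single (m - Poly_Mapping.single \<rho> 1)
                     (of_nat (Poly_Mapping.lookup m \<rho>) * Poly_Mapping.lookup p m))"

definition mat_mult :: "('n::finite \<Rightarrow> 'n \<Rightarrow> 'a::comm_ring_1) \<Rightarrow> ('n \<Rightarrow> 'n \<Rightarrow> 'a) \<Rightarrow> 'n \<Rightarrow> 'n \<Rightarrow> 'a" where
  "mat_mult A B = (\<lambda>i j. \<Sum>k\<in>UNIV. A i k * B k j)"

definition mat_id :: "'n \<Rightarrow> 'n \<Rightarrow> 'a::comm_ring_1" where
  "mat_id = (\<lambda>i j. if i = j then 1 else 0)"

fun mat_pow :: "('n::finite \<Rightarrow> 'n \<Rightarrow> 'a::comm_ring_1) \<Rightarrow> nat \<Rightarrow> 'n \<Rightarrow> 'n \<Rightarrow> 'a" where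
  "mat_pow A 0 = mat_id"
| "mat_pow A (Suc N) = mat_mult (mat_pow A N) A"

text \<open>C l m n stands for C^l_{mn}: [x_m, x_n] = C^l_{mn} x_l. Structure constants of a Lie
  algebra: antisymmetric in the lower indices and satisfying the Jacobi identity.\<close>
definition lie_structure_constants :: "('n::finite \<Rightarrow> 'n \<Rightarrow> 'n \<Rightarrow> 'k::field) \<Rightarrow> bool" where
  "lie_structure_constants C \<longleftrightarrow>
     (\<forall>l m n. C l m n = - C l n m) \<and>
     (\<forall>l m n r. (\<Sum>s\<in>UNIV. C s m n * C l s r + C s n r * C l s m + C s r m * C l s n) = 0)"

definition Cmat :: "('n::finite \<Rightarrow> 'n \<Rightarrow> 'n \<Rightarrow> 'k::field) \<Rightarrow> 'n \<Rightarrow> 'n \<Rightarrow> ('n, 'k) mpoly" where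
  "Cmat C = (\<lambda>\<alpha> \<beta>. \<Sum>\<gamma>\<in>UNIV. pconst (C \<alpha> \<beta> \<gamma>) * pvar \<gamma>)"

end

theory Submission imports Defs begin

text \<open>Induction on \<open>N\<close>, proving the identity for an arbitrary matrix \<open>X\<close> in place of
  \<open>\<C>\<^sup>N\<close>. For \<open>X = 1\<close> it is the antisymmetry of \<open>C\<close>. Passing from \<open>X\<close> to \<open>X \<C>\<close>,
  the Leibniz rule together with \<open>\<delta>\<^sub>\<rho> \<C>\<^sup>\<alpha>\<^sub>\<mu> = C\<^sup>\<alpha>\<^sub>\<mu>\<^sub>\<rho>\<close> and the identity for \<open>X\<close> leaves the
  term \<open>X\<^sup>\<gamma>\<^sub>\<sigma> (C\<^sup>\<sigma>\<^sub>\<alpha>\<^sub>\<nu> \<C>\<^sup>\<alpha>\<^sub>\<mu> + C\<^sup>\<sigma>\<^sub>\<mu>\<^sub>\<rho> \<C>\<^sup>\<rho>\<^sub>\<nu>)\<close>, and the Jacobi identity contracted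
  with \<open>\<partial>\<close> turns the bracket into \<open>C\<^sup>s\<^sub>\<mu>\<^sub>\<nu> \<C>\<^sup>\<sigma>\<^sub>s\<close>.\<close>

lemma pderiv_var_eq_sum_superset:
  assumes "finite S" and "Poly_Mapping.keys p \<subseteq> S"
  shows "pderiv_var \<rho> p = (\<Sum>m\<in>S. Poly_Mapping.single (m - Poly_Mapping.single \<rho> 1)
                     (of_nat (Poly_Mapping.lookup m \<rho>) * Poly_Mapping.lookup p m))"
  unfolding pderiv_var_def using assms by (intro sum.mono_neutral_left) (auto simp: in_keys_iff)

lemma pderiv_var_add: "pderiv_var \<rho> (p + q) = pderiv_var \<rho> p + pderiv_var \<rho> q"
proof -
  let ?S = "Poly_Mapping.keys p \<union> Poly_Mapping.keys q"
  have "Poly_Mapping.keys (p + q) \<subseteq> ?S"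
    by (rule keys_add)
  then show ?thesis
    by (simp add: pderiv_var_eq_sum_superset[of ?S] lookup_add distrib_left single_add
        sum.distrib)
qed

lemma pderiv_var_zero [simp]: "pderiv_var \<rho> 0 = 0"
  by (simp add: pderiv_var_def)

lemma pderiv_var_sum: "pderiv_var \<rho> (\<Sum>i\<in>A. f i) = (\<Sum>i\<in>A. pderiv_var \<rho> (f i))"
  by (induction A rule: infinite_finite_induct) (simp_all add: pderiv_var_add)

lemma pderiv_var_single:
  "pderiv_var \<rho> (Poly_Mapping.single m c) =
   Poly_Mapping.single (m - Poly_Mapping.single \<rho> 1) (of_nat (Poly_Mapping.lookup m \<rho>) * c)"
  by (cases "c = 0") (simp_all add: pderiv_var_def)

lemma poly_mapping_eq_sum_single:
  "p = (\<Sum>m\<in>Poly_Mapping.keys p. Poly_Mapping.single m (Poly_Mapping.lookup p m))"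
  by (rule poly_mapping_eqI) (simp add: lookup_sum lookup_single when_def in_keys_iff)

lemma diff_single_add_commute:
  assumes "Poly_Mapping.lookup m \<rho> \<noteq> 0"
  shows "m - Poly_Mapping.single \<rho> (1::nat) + n = m + n - Poly_Mapping.single \<rho> 1"
  using assms by (intro poly_mapping_eqI) (auto simp: lookup_add lookup_minus lookup_single when_def)

text \<open>Subtraction of exponent vectors is truncated; it is harmless here because the
  coefficient vanishes whenever \<open>\<partial>\<^sup>\<rho>\<close> does not occur in \<open>m\<close>.\<close>
lemma single_diff_single_add_eq:
  "Poly_Mapping.single (m - Poly_Mapping.single \<rho> 1 + n) (of_nat (Poly_Mapping.lookup m \<rho>) * c)
   = Poly_Mapping.single (m + n - Poly_Mapping.single \<rho> 1) (of_nat (Poly_Mapping.lookup m \<rho>) * c :: 'k::comm_ring_1)"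
  using diff_single_add_commute[of m \<rho> n] by (cases "Poly_Mapping.lookup m \<rho> = 0") simp_all

lemma pderiv_var_single_mult_single:
  "pderiv_var \<rho> (Poly_Mapping.single m a * Poly_Mapping.single n b :: ('n, 'k::comm_ring_1) mpoly) =
   pderiv_var \<rho> (Poly_Mapping.single m a) * Poly_Mapping.single n b
   + Poly_Mapping.single m a * pderiv_var \<rho> (Poly_Mapping.single n b)"
  using single_diff_single_add_eq[of m \<rho> n "a * b"] single_diff_single_add_eq[of n \<rho> m "a * b"]
  by (simp add: mult_single pderiv_var_single lookup_add ring_distribs single_add ac_simps)

lemma pderiv_var_mult:
  "pderiv_var \<rho> (p * q :: ('n, 'k::comm_ring_1) mpoly) = pderiv_var \<rho> p * q + p * pderiv_var \<rho> q"
proof -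
  define s where "s p m = Poly_Mapping.single m (Poly_Mapping.lookup p m)" for p :: "('n, 'k) mpoly" and m
  have expand: "r = (\<Sum>m\<in>Poly_Mapping.keys r. s r m)" for r
    unfolding s_def by (rule poly_mapping_eq_sum_single)
  have "pderiv_var \<rho> ((\<Sum>m\<in>Poly_Mapping.keys p. s p m) * (\<Sum>n\<in>Poly_Mapping.keys q. s q n))
    = pderiv_var \<rho> (\<Sum>m\<in>Poly_Mapping.keys p. s p m) * (\<Sum>n\<in>Poly_Mapping.keys q. s q n)
      + (\<Sum>m\<in>Poly_Mapping.keys p. s p m) * pderiv_var \<rho> (\<Sum>n\<in>Poly_Mapping.keys q. s q n)"
    by (simp add: sum_product pderiv_var_sum s_def pderiv_var_single_mult_single sum.distrib)
  then show ?thesis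
    by (simp only: expand[symmetric])
qed

lemma pconst_add: "pconst (a + b) = (pconst a + pconst b :: ('n, 'k::comm_ring_1) mpoly)"
  by (simp add: pconst_def single_add)

lemma pconst_mult: "pconst (a * b) = (pconst a * pconst b :: ('n, 'k::comm_ring_1) mpoly)"
  by (simp add: pconst_def mult_single)

lemma pconst_sum: "pconst (\<Sum>i\<in>A. f i) = (\<Sum>i\<in>A. pconst (f i) :: ('n, 'k::comm_ring_1) mpoly)"
  by (induction A rule: infinite_finite_induct) (simp_all add: pconst_add, simp_all add: pconst_def)

lemma pderiv_var_pconst [simp]: "pderiv_var \<rho> (pconst c :: ('n, 'k::comm_ring_1) mpoly) = 0"
  by (simp add: pconst_def pderiv_var_single)

lemma pderiv_var_one [simp]: "pderiv_var \<rho> (1 :: ('n, 'k::comm_ring_1) mpoly) = 0"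
  using pderiv_var_pconst[of \<rho> 1] by (simp add: pconst_def)

lemma pderiv_var_pvar: "pderiv_var \<rho> (pvar i :: ('n, 'k::comm_ring_1) mpoly) = (if \<rho> = i then 1 else 0)"
  by (simp add: pvar_def pderiv_var_single lookup_single)

lemma pderiv_var_Cmat: "pderiv_var \<rho> (Cmat C \<alpha> \<beta>) = pconst (C \<alpha> \<beta> \<rho>)"
  by (simp add: Cmat_def pderiv_var_sum pderiv_var_mult pderiv_var_pvar if_distrib cong: if_cong)

lemma sum_pconst_mult_linear_form:
  "(\<Sum>s\<in>UNIV. pconst (a s) * (\<Sum>i\<in>UNIV. pconst (c s i) * pvar i))
   = (\<Sum>i\<in>(UNIV::'n::finite set). pconst (\<Sum>s\<in>(UNIV::'m::finite set). a s * c s i)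
        * (pvar i :: ('n, 'k::comm_ring_1) mpoly))"
  by (simp add: sum_distrib_left sum_distrib_right pconst_sum pconst_mult mult.assoc)
    (rule sum.swap)

lemma lie_structure_constants_contracted_jacobi:
  fixes C :: "'n::finite \<Rightarrow> 'n \<Rightarrow> 'n \<Rightarrow> 'k::field"
  assumes "lie_structure_constants C"
  shows "(\<Sum>s\<in>UNIV. C \<alpha> s \<nu> * C s \<mu> k) + (\<Sum>s\<in>UNIV. C \<alpha> \<mu> s * C s \<nu> k)
      = (\<Sum>s\<in>UNIV. C s \<mu> \<nu> * C \<alpha> s k)"
proof -
  from assms have anti: "\<And>l m n. C l m n = - C l n m"
    and jacobi: "(\<Sum>s\<in>UNIV. C s \<mu> \<nu> * C \<alpha> s k + C s \<nu> k * C \<alpha> s \<mu> + C s k \<mu> * C \<alpha> s \<nu>) = 0"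
    unfolding lie_structure_constants_def by blast+
  have "(\<Sum>s\<in>UNIV. C s \<mu> \<nu> * C \<alpha> s k + C s \<nu> k * C \<alpha> s \<mu> + C s k \<mu> * C \<alpha> s \<nu>)
     = (\<Sum>s\<in>UNIV. C s \<mu> \<nu> * C \<alpha> s k) - (\<Sum>s\<in>UNIV. C \<alpha> s \<nu> * C s \<mu> k)
       - (\<Sum>s\<in>UNIV. C \<alpha> \<mu> s * C s \<nu> k)"
    unfolding sum_subtractf[symmetric]
    by (rule sum.cong) (simp_all add: anti[of \<alpha> _ \<mu>] anti[of _ k \<mu>] algebra_simps)
  with jacobi show ?thesis
    by (simp add: algebra_simps)
qed

lemma Cmat_jacobi:
  fixes C :: "'n::finite \<Rightarrow> 'n \<Rightarrow> 'n \<Rightarrow> 'k::field"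
  assumes "lie_structure_constants C"
  shows "(\<Sum>s\<in>UNIV. pconst (C \<alpha> s \<nu>) * Cmat C s \<mu>) + (\<Sum>s\<in>UNIV. pconst (C \<alpha> \<mu> s) * Cmat C s \<nu>)
     = (\<Sum>s\<in>UNIV. pconst (C s \<mu> \<nu>) * Cmat C \<alpha> s)"
  unfolding Cmat_def sum_pconst_mult_linear_form
    lie_structure_constants_contracted_jacobi[OF assms, symmetric]
  by (simp add: pconst_add distrib_right sum.distrib)

definition Cmat_derivative_identity ::
    "('n::finite \<Rightarrow> 'n \<Rightarrow> 'n \<Rightarrow> 'k::field) \<Rightarrow> ('n \<Rightarrow> 'n \<Rightarrow> ('n, 'k) mpoly) \<Rightarrow> bool" where
  "Cmat_derivative_identity C X \<longleftrightarrow> (\<forall>\<gamma> \<mu> \<nu>.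
     (\<Sum>\<rho>\<in>UNIV. pderiv_var \<rho> (X \<gamma> \<mu>) * Cmat C \<rho> \<nu>)
     - (\<Sum>\<rho>\<in>UNIV. pderiv_var \<rho> (Cmat C \<gamma> \<nu>) * X \<rho> \<mu>)
     = (\<Sum>\<sigma>\<in>UNIV. pconst (C \<sigma> \<mu> \<nu>) * X \<gamma> \<sigma>))"

lemma Cmat_derivative_identity_mat_id:
  assumes "lie_structure_constants C"
  shows "Cmat_derivative_identity C mat_id"
  unfolding Cmat_derivative_identity_def
proof (intro allI)
  fix \<gamma> \<mu> \<nu>
  have "C \<gamma> \<nu> \<mu> = - C \<gamma> \<mu> \<nu>"
    using assms unfolding lie_structure_constants_def by blast
  then show "(\<Sum>\<rho>\<in>UNIV. pderiv_var \<rho> (mat_id \<gamma> \<mu>) * Cmat C \<rho> \<nu>)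
      - (\<Sum>\<rho>\<in>UNIV. pderiv_var \<rho> (Cmat C \<gamma> \<nu>) * mat_id \<rho> \<mu>)
      = (\<Sum>\<sigma>\<in>UNIV. pconst (C \<sigma> \<mu> \<nu>) * mat_id \<gamma> \<sigma>)"
    by (simp add: mat_id_def pderiv_var_Cmat if_distrib pconst_def single_uminus cong: if_cong)
qed

lemma Cmat_derivative_identity_mat_mult_Cmat:
  assumes lie: "lie_structure_constants C" and X: "Cmat_derivative_identity C X"
  shows "Cmat_derivative_identity C (mat_mult X (Cmat C))"
  unfolding Cmat_derivative_identity_def
proof (intro allI)
  fix \<gamma> \<mu> \<nu>
  let ?A = "Cmat C" and ?Y = "mat_mult X (Cmat C)"
  have IH: "(\<Sum>\<rho>\<in>UNIV. pderiv_var \<rho> (X \<gamma> \<alpha>) * ?A \<rho> \<nu>)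
      = (\<Sum>\<sigma>\<in>UNIV. pconst (C \<sigma> \<alpha> \<nu>) * X \<gamma> \<sigma>) + (\<Sum>\<rho>\<in>UNIV. pconst (C \<gamma> \<nu> \<rho>) * X \<rho> \<alpha>)" for \<alpha>
    using X by (simp add: Cmat_derivative_identity_def pderiv_var_Cmat algebra_simps)
  have "(\<Sum>\<rho>\<in>UNIV. pderiv_var \<rho> (?Y \<gamma> \<mu>) * ?A \<rho> \<nu>)
      = (\<Sum>\<alpha>\<in>UNIV. (\<Sum>\<rho>\<in>UNIV. pderiv_var \<rho> (X \<gamma> \<alpha>) * ?A \<rho> \<nu>) * ?A \<alpha> \<mu>)
        + (\<Sum>\<alpha>\<in>UNIV. X \<gamma> \<alpha> * (\<Sum>\<rho>\<in>UNIV. pconst (C \<alpha> \<mu> \<rho>) * ?A \<rho> \<nu>))"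
    unfolding mat_mult_def
    by (simp add: pderiv_var_sum pderiv_var_mult pderiv_var_Cmat sum.distrib ring_distribs
        sum_distrib_left sum_distrib_right mult_ac) (subst (1 2) sum.swap, simp add: mult_ac)
  moreover have "(\<Sum>\<rho>\<in>UNIV. pderiv_var \<rho> (?A \<gamma> \<nu>) * ?Y \<rho> \<mu>)
      = (\<Sum>\<alpha>\<in>UNIV. (\<Sum>\<rho>\<in>UNIV. pconst (C \<gamma> \<nu> \<rho>) * X \<rho> \<alpha>) * ?A \<alpha> \<mu>)"
    unfolding mat_mult_def
    by (simp add: pderiv_var_Cmat sum_distrib_left sum_distrib_right mult_ac) (rule sum.swap)
  ultimately have "(\<Sum>\<rho>\<in>UNIV. pderiv_var \<rho> (?Y \<gamma> \<mu>) * ?A \<rho> \<nu>)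
      - (\<Sum>\<rho>\<in>UNIV. pderiv_var \<rho> (?A \<gamma> \<nu>) * ?Y \<rho> \<mu>)
      = (\<Sum>\<alpha>\<in>UNIV. (\<Sum>\<sigma>\<in>UNIV. pconst (C \<sigma> \<alpha> \<nu>) * X \<gamma> \<sigma>) * ?A \<alpha> \<mu>)
        + (\<Sum>\<sigma>\<in>UNIV. X \<gamma> \<sigma> * (\<Sum>\<rho>\<in>UNIV. pconst (C \<sigma> \<mu> \<rho>) * ?A \<rho> \<nu>))"
    by (simp add: IH distrib_right sum.distrib)
  also have "\<dots> = (\<Sum>\<sigma>\<in>UNIV. X \<gamma> \<sigma> * ((\<Sum>\<alpha>\<in>UNIV. pconst (C \<sigma> \<alpha> \<nu>) * ?A \<alpha> \<mu>)
        + (\<Sum>\<rho>\<in>UNIV. pconst (C \<sigma> \<mu> \<rho>) * ?A \<rho> \<nu>)))"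
    by (simp add: distrib_left sum.distrib sum_distrib_left sum_distrib_right mult_ac)
      (rule sum.swap)
  also have "\<dots> = (\<Sum>\<sigma>\<in>UNIV. X \<gamma> \<sigma> * (\<Sum>s\<in>UNIV. pconst (C s \<mu> \<nu>) * ?A \<sigma> s))"
    by (simp only: Cmat_jacobi[OF lie])
  also have "\<dots> = (\<Sum>\<sigma>\<in>UNIV. pconst (C \<sigma> \<mu> \<nu>) * ?Y \<gamma> \<sigma>)"
    unfolding mat_mult_def
    by (simp add: sum_distrib_left sum_distrib_right mult_ac) (rule sum.swap)
  finally show "(\<Sum>\<rho>\<in>UNIV. pderiv_var \<rho> (?Y \<gamma> \<mu>) * ?A \<rho> \<nu>)
      - (\<Sum>\<rho>\<in>UNIV. pderiv_var \<rho> (?A \<gamma> \<nu>) * ?Y \<rho> \<mu>)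
      = (\<Sum>\<sigma>\<in>UNIV. pconst (C \<sigma> \<mu> \<nu>) * ?Y \<gamma> \<sigma>)" .
qed

theorem lemma2:
  fixes C :: "'n::finite \<Rightarrow> 'n \<Rightarrow> 'n \<Rightarrow> 'k::field_char_0"
  assumes "lie_structure_constants C"
  shows "\<forall>N \<gamma> \<mu> \<nu>.
    (\<Sum>\<rho>\<in>UNIV. pderiv_var \<rho> (mat_pow (Cmat C) N \<gamma> \<mu>) * Cmat C \<rho> \<nu>)
    - (\<Sum>\<rho>\<in>UNIV. pderiv_var \<rho> (Cmat C \<gamma> \<nu>) * mat_pow (Cmat C) N \<rho> \<mu>)
    = (\<Sum>\<sigma>\<in>UNIV. pconst (C \<sigma> \<mu> \<nu>) * mat_pow (Cmat C) N \<gamma> \<sigma>)"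
proof
  fix N
  have "Cmat_derivative_identity C (mat_pow (Cmat C) N)"
    by (induction N) (simp_all add: assms Cmat_derivative_identity_mat_id
        Cmat_derivative_identity_mat_mult_Cmat)
  then show "\<forall>\<gamma> \<mu> \<nu>.
    (\<Sum>\<rho>\<in>UNIV. pderiv_var \<rho> (mat_pow (Cmat C) N \<gamma> \<mu>) * Cmat C \<rho> \<nu>)
    - (\<Sum>\<rho>\<in>UNIV. pderiv_var \<rho> (Cmat C \<gamma> \<nu>) * mat_pow (Cmat C) N \<rho> \<mu>)
    = (\<Sum>\<sigma>\<in>UNIV. pconst (C \<sigma> \<mu> \<nu>) * mat_pow (Cmat C) N \<gamma> \<sigma>)"
    unfolding Cmat_derivative_identity_def .
qed

end
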